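(* Let $\phi\ge1$, let $p\in\mathbb{R}_{\ge0}^n$ be arbitrary, and let each weight $w_i$ be chosen uniformly at random from an arbitrary interval $A_i\subseteq[0,1]$ of length $1/\phi$, independently of the other weights. Let $t\ge0$. Then for every $i\in\{1,\ldots,n\}$ and every $\varepsilon\ge0$, $\Pr[\Lambda^i(t)\in(0,\varepsilon]]\le\phi\varepsilon$.
   Context: For $i\in\{1,\ldots,n\}$ and $j\in\{0,1\}$ let $\mathcal{S}^{x_i=j}=\{x\in\{0,1\}^n: x_i=j\}$. Let $x^{\star,i}$ be a solution maximizing $p^{\mathsf T}x$ over $\{x\in\mathcal{S}^{x_i=0}: w^{\mathsf T}x\le t\}$, and let $\hat{x}^i$ be a solution minimizing $w^{\mathsf T}x$ over $\{x\in\mathcal{S}^{x_i=1}: p^{\mathsf T}x>p^{\mathsf T}x^{\star,i}\}$, with $\hat{x}^i=\perp$ if this set is empty. Define $\Lambda^i(t)=w^{\mathsf T}\hat{x}^i-t$ if $\hat{x}^i\ne\perp$ and $\Lambda^i(t)=\infty$ otherwise. *)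

theory Defs
  imports "HOL-Probability.Probability"
begin

text \<open>0/1 vectors of length n, indexed 0..n-1, extended by 0 outside.\<close>
definition binvecs :: "nat \<Rightarrow> (nat \<Rightarrow> real) set" where
  "binvecs n = {x. (\<forall>j<n. x j \<in> {0,1}) \<and> (\<forall>j\<ge>n. x j = 0)}"

definition dotp :: "nat \<Rightarrow> (nat \<Rightarrow> real) \<Rightarrow> (nat \<Rightarrow> real) \<Rightarrow> real" where
  "dotp n u x = (\<Sum>j<n. u j * x j)"

definition fixset :: "nat \<Rightarrow> nat \<Rightarrow> real \<Rightarrow> (nat \<Rightarrow> real) set" where
  "fixset n i b = {x \<in> binvecs n. x i = b}"

definition xstar :: "nat \<Rightarrow> (nat \<Rightarrow> real) \<Rightarrow> (nat \<Rightarrow> real) \<Rightarrow> real \<Rightarrow> nat \<Rightarrow> (nat \<Rightarrow> real)" where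
  "xstar n p w t i = (SOME x. x \<in> {y \<in> fixset n i 0. dotp n w y \<le> t} \<and>
      (\<forall>y \<in> {y \<in> fixset n i 0. dotp n w y \<le> t}. dotp n p y \<le> dotp n p x))"

definition hatset :: "nat \<Rightarrow> (nat \<Rightarrow> real) \<Rightarrow> (nat \<Rightarrow> real) \<Rightarrow> real \<Rightarrow> nat \<Rightarrow> (nat \<Rightarrow> real) set" where
  "hatset n p w t i = {x \<in> fixset n i 1. dotp n p x > dotp n p (xstar n p w t i)}"

text \<open>\<hat>x^i: a solution minimizing w^T x over hatset (only meaningful if hatset nonempty)\<close>
definition xhat :: "nat \<Rightarrow> (nat \<Rightarrow> real) \<Rightarrow> (nat \<Rightarrow> real) \<Rightarrow> real \<Rightarrow> nat \<Rightarrow> (nat \<Rightarrow> real)" where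
  "xhat n p w t i = (SOME x. x \<in> hatset n p w t i \<and>
      (\<forall>y \<in> hatset n p w t i. dotp n w x \<le> dotp n w y))"

text \<open>\<Lambda>^i(t), with \<open>\<infinity>\<close> when \<hat>x^i = \<bottom>\<close>
definition Lambda :: "nat \<Rightarrow> (nat \<Rightarrow> real) \<Rightarrow> (nat \<Rightarrow> real) \<Rightarrow> real \<Rightarrow> nat \<Rightarrow> ereal" where
  "Lambda n p w t i = (if hatset n p w t i = {} then \<infinity>
      else ereal (dotp n w (xhat n p w t i) - t))"

end

theory Submission
  imports Defs
begin

text \<open>Changing the weight \<open>w\<^sub>i\<close> leaves \<open>w\<^sup>T x\<close> unchanged when \<open>x\<^sub>i = 0\<close> and shifts it by
  the same amount for all \<open>x\<close> with \<open>x\<^sub>i = 1\<close>. So neither \<open>x\<^sup>\<star>\<^sup>,\<^sup>i\<close> nor the minimiser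
  \<open>x\<^sup>i\<close>-hat depends on \<open>w\<^sub>i\<close>, and \<open>\<Lambda>\<^sup>i(t) = w\<^sub>i - c\<close> with \<open>c\<close> depending only on the other
  weights. Given those, \<open>\<Lambda>\<^sup>i(t) \<in> (0, \<epsilon>]\<close> confines \<open>w\<^sub>i\<close> to an interval of length \<open>\<epsilon>\<close>, which has
  probability at most \<open>\<phi>\<epsilon>\<close> under the uniform density \<open>\<phi>\<close>; Fubini integrates this bound over
  the other weights.\<close>

lemma dotp_fun_upd:
  assumes "i < n"
  shows "dotp n (w(i := v)) x = dotp n w x + (v - w i) * x i"
proof -
  have "dotp n (w(i := v)) x = (\<Sum>j<n. w j * x j + (if j = i then (v - w i) * x i else 0))"
    unfolding dotp_def by (intro sum.cong) (auto simp: algebra_simps)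
  then show ?thesis
    using assms by (simp add: sum.distrib dotp_def)
qed

lemma finite_binvecs: "finite (binvecs n)"
proof (rule finite_subset)
  show "binvecs n \<subseteq> {x. \<forall>j. (j \<in> {..<n} \<longrightarrow> x j \<in> {0, 1}) \<and> (j \<notin> {..<n} \<longrightarrow> x j = 0)}"
    by (auto simp: binvecs_def)
qed (intro finite_set_of_finite_funs; simp)

lemma xhat_in_hatset:
  assumes "hatset n p w t i \<noteq> {}"
  shows "xhat n p w t i \<in> hatset n p w t i"
proof -
  have "finite (hatset n p w t i)"
    using finite_binvecs by (rule rev_finite_subset) (auto simp: hatset_def fixset_def)
  then obtain m where "is_arg_min (dotp n w) (\<lambda>x. x \<in> hatset n p w t i) m"
    using ex_is_arg_min_if_finite assms by blast
  then have "m \<in> hatset n p w t i \<and> (\<forall>y \<in> hatset n p w t i. dotp n w m \<le> dotp n w y)"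
      (is "?minimal m")
    by (auto simp: is_arg_min_def not_less)
  then have "?minimal (xhat n p w t i)"
    unfolding xhat_def by (rule someI[of ?minimal])
  then show ?thesis ..
qed

lemma xstar_fun_upd:
  assumes "i < n"
  shows "xstar n p (w(i := v)) t i = xstar n p w t i"
proof -
  have "{y \<in> fixset n i 0. dotp n (w(i := v)) y \<le> t} = {y \<in> fixset n i 0. dotp n w y \<le> t}"
    using dotp_fun_upd[OF assms] by (auto simp: fixset_def)
  then show ?thesis
    unfolding xstar_def by simp
qed

lemma hatset_fun_upd:
  assumes "i < n"
  shows "hatset n p (w(i := v)) t i = hatset n p w t i"
  unfolding hatset_def xstar_fun_upd[OF assms] ..

lemma xhat_fun_upd:
  assumes "i < n"
  shows "xhat n p (w(i := v)) t i = xhat n p w t i"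
proof -
  have "dotp n (w(i := v)) x \<le> dotp n (w(i := v)) y \<longleftrightarrow> dotp n w x \<le> dotp n w y"
    if "x \<in> hatset n p w t i" "y \<in> hatset n p w t i" for x y
    using that dotp_fun_upd[OF assms] by (simp add: hatset_def fixset_def)
  then have "(\<lambda>x. x \<in> hatset n p w t i \<and> (\<forall>y \<in> hatset n p w t i. dotp n (w(i := v)) x \<le> dotp n (w(i := v)) y))
      = (\<lambda>x. x \<in> hatset n p w t i \<and> (\<forall>y \<in> hatset n p w t i. dotp n w x \<le> dotp n w y))"
    by (intro ext conj_cong refl ball_cong) auto
  then show ?thesis
    unfolding xhat_def hatset_fun_upd[OF assms] by simp
qed

lemma Lambda_fun_upd:
  assumes "i < n"
  shows "Lambda n p (w(i := v)) t i = Lambda n p w t i + ereal (v - w i)"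
proof (cases "hatset n p w t i = {}")
  case False
  then have "xhat n p w t i i = 1"
    using xhat_in_hatset by (force simp: hatset_def fixset_def)
  with False show ?thesis
    by (simp add: Lambda_def hatset_fun_upd[OF assms] xhat_fun_upd[OF assms] dotp_fun_upd[OF assms])
qed (simp add: Lambda_def hatset_fun_upd[OF assms])

lemma measure_uniform_interval_le:
  fixes a b c d :: real
  assumes "a < b" "c \<le> d"
  shows "measure (uniform_measure lborel {a..b}) {c<..d} \<le> (d - c) / (b - a)"
proof -
  have "emeasure (uniform_measure lborel {a..b}) {c<..d}
      = emeasure lborel ({a..b} \<inter> {c<..d}) / ennreal (b - a)"
    using assms by simp
  also have "\<dots> \<le> emeasure lborel {c<..d} / ennreal (b - a)"
    by (intro divide_right_mono_ennreal emeasure_mono) auto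
  also have "\<dots> = ennreal ((d - c) / (b - a))"
    using assms by (simp add: divide_ennreal)
  finally show ?thesis
    using assms by (simp add: measure_def enn2real_leI)
qed

lemma measure_PiM_le_by_sections:
  assumes "finite I" "i \<in> I" "\<And>j. prob_space (M j)" "c \<ge> 0"
    and sections: "\<And>x. \<exists>T \<in> sets (M i). (\<forall>y. P (x(i := y)) \<longrightarrow> y \<in> T) \<and> measure (M i) T \<le> c"
  shows "measure (PiM I M) {w \<in> space (PiM I M). P w} \<le> c"
proof (cases "{w \<in> space (PiM I M). P w} \<in> sets (PiM I M)")
  case True
  define S where "S = {w \<in> space (PiM I M). P w}"
  interpret product_sigma_finite M
    using assms(3) by (simp add: product_sigma_finite_def prob_space_imp_sigma_finite)
  interpret rest: prob_space "PiM (I - {i}) M"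
    using assms(3) by (rule prob_space_PiM)
  have section_bound: "(\<integral>\<^sup>+ y. indicator S (x(i := y)) \<partial>M i) \<le> ennreal c" for x
  proof -
    obtain T where T: "T \<in> sets (M i)" "\<forall>y. P (x(i := y)) \<longrightarrow> y \<in> T" "measure (M i) T \<le> c"
      using sections by blast
    interpret prob_space "M i" by (rule assms(3))
    have "(\<integral>\<^sup>+ y. indicator S (x(i := y)) \<partial>M i) \<le> (\<integral>\<^sup>+ y. indicator T y \<partial>M i)"
      using T(2) by (intro nn_integral_mono) (auto simp: S_def split: split_indicator)
    also have "\<dots> = ennreal (measure (M i) T)"
      using T(1) by (simp add: emeasure_eq_measure)
    finally show ?thesis
      using T(3) by (meson ennreal_leI order_trans)
  qed
  have I_split: "insert i (I - {i}) = I"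
    using assms(2) by blast
  have "emeasure (PiM I M) S = (\<integral>\<^sup>+ w. indicator S w \<partial>PiM I M)"
    using True by (simp add: S_def)
  also have "\<dots> = (\<integral>\<^sup>+ x. (\<integral>\<^sup>+ y. indicator S (x(i := y)) \<partial>M i) \<partial>PiM (I - {i}) M)"
    using product_nn_integral_insert[of "I - {i}" i "indicator S"] True assms(1)
    unfolding I_split S_def by simp
  also have "\<dots> \<le> (\<integral>\<^sup>+ x. ennreal c \<partial>PiM (I - {i}) M)"
    by (intro nn_integral_mono section_bound)
  also have "\<dots> = ennreal c"
    by (simp add: rest.emeasure_space_1)
  finally show ?thesis
    using assms(4) by (simp add: S_def measure_def enn2real_leI)
qed (simp add: measure_notin_sets assms(4))

theorem lemma2p7:
  fixes n :: nat and \<phi> :: real and p a :: "nat \<Rightarrow> real" and t \<epsilon> :: real and i :: nat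
  assumes "\<phi> \<ge> 1"
    and "\<forall>j<n. p j \<ge> 0"
    and "\<forall>j<n. 0 \<le> a j \<and> a j + 1 / \<phi> \<le> 1"
    and "t \<ge> 0"
    and "i < n"
    and "\<epsilon> \<ge> 0"
  shows "measure (PiM {..<n} (\<lambda>j. uniform_measure lborel {a j .. a j + 1 / \<phi>}))
           {w \<in> space (PiM {..<n} (\<lambda>j. uniform_measure lborel {a j .. a j + 1 / \<phi>})).
              Lambda n p w t i \<in> {0<..ereal \<epsilon>}}
         \<le> \<phi> * \<epsilon>"
proof (rule measure_PiM_le_by_sections)
  show "prob_space (uniform_measure lborel {a j .. a j + 1 / \<phi>})" for j
    using assms(1) by (intro prob_space_uniform_measure) auto
  fix x :: "nat \<Rightarrow> real"
  \<comment> \<open>If \<open>\<Lambda>\<close> is infinite here, \<open>c\<close> is junk, but then \<open>\<Lambda>\<close> is infinite for every value of \<open>w\<^sub>i\<close>.\<close>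
  define c where "c = - real_of_ereal (Lambda n p (x(i := 0)) t i)"
  have "y \<in> {c<..c + \<epsilon>}" if "Lambda n p (x(i := y)) t i \<in> {0<..ereal \<epsilon>}" for y
  proof -
    have "Lambda n p (x(i := y)) t i = Lambda n p (x(i := 0)) t i + ereal y"
      using Lambda_fun_upd[OF assms(5), where w = "x(i := 0)" and v = y] by simp
    with that show ?thesis
      by (cases "Lambda n p (x(i := 0)) t i") (auto simp: c_def)
  qed
  moreover have "{c<..c + \<epsilon>} \<in> sets (uniform_measure lborel {a i .. a i + 1 / \<phi>})"
    by simp
  moreover have "measure (uniform_measure lborel {a i .. a i + 1 / \<phi>}) {c<..c + \<epsilon>} \<le> \<phi> * \<epsilon>"
    using measure_uniform_interval_le[of "a i" "a i + 1 / \<phi>" c "c + \<epsilon>"] assms(1,6) by simp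
  ultimately show "\<exists>T \<in> sets (uniform_measure lborel {a i .. a i + 1 / \<phi>}).
      (\<forall>y. Lambda n p (x(i := y)) t i \<in> {0<..ereal \<epsilon>} \<longrightarrow> y \<in> T)
      \<and> measure (uniform_measure lborel {a i .. a i + 1 / \<phi>}) T \<le> \<phi> * \<epsilon>"
    by blast
qed (use assms(1,5,6) in auto)

end
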